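(* Let $G$ be a connected simple graph with $v$ vertices and $|E|$ edges, and let $p_1=|E|-v+1$. Then $H^{1,v-1}_{\mathcal A_2}(G)\cong\mathbb Z^{p_1}$ if $G$ is bipartite, and $H^{1,v-1}_{\mathcal A_2}(G)\cong\mathbb Z^{p_1-1}\oplus\mathbb Z_2$ if $G$ has an odd cycle.
   Context: $\mathcal A_2=\mathbb Z[x]/(x^2)$. For a finite graph $G$ with a fixed total order on its edge set $E(G)$ and $s\subseteq E(G)$, $[G:s]$ is the spanning subgraph with edge set $s$. An enhanced state is a pair $(s,c)$ where $c$ assigns to each component $C$ of $[G:s]$ an exponent $c(C)\in\{0,1\}$ (weight $x^{c(C)}$); its bidegree is $(|s|,\sum_C c(C))$. $C^{i,j}_{\mathcal A_2}(G)$ is the free abelian group on enhanced states of bidegree $(i,j)$, with differential $d=\sum_{e\notin s}(-1)^{|\{f\in s:f<e\}|}d_e$, where $d_e(s,c)$ is the enhanced state on $s\cup\{e\}$ obtained, if $e$ joins distinct components $C_1,C_2$, by giving the merged component weight $x^{c(C_1)}x^{c(C_2)}\in\mathcal A_2$ (zero if the exponent sum is $\ge2$), other weights unchanged, and, if both endpoints of $e$ lie in one component, by keeping all weights. $H^{i,j}_{\mathcal A_2}(G)$ is its cohomology. *)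

theory Defs
  imports "HOL-Algebra.Algebra"
begin

text \<open>A finite simple graph is given by a finite vertex set V and a duplicate-free list es
of edges (two-element subsets of V); the position of an edge in the list is its index and
the total order on E(G) is the order of indices. Spanning subgraphs [G:s] are given by
sets s of edge indices.\<close>

definition simple_graph :: "'v set \<Rightarrow> 'v set list \<Rightarrow> bool" where
  "simple_graph V es \<longleftrightarrow> finite V \<and> distinct es \<and> (\<forall>e\<in>set es. e \<subseteq> V \<and> card e = 2)"

definition adj :: "'v set list \<Rightarrow> nat set \<Rightarrow> 'v \<Rightarrow> 'v \<Rightarrow> bool" where
  "adj es s a b \<longleftrightarrow> (\<exists>k\<in>s. k < length es \<and> es ! k = {a, b})"

definition reach :: "'v set list \<Rightarrow> nat set \<Rightarrow> 'v \<Rightarrow> 'v \<Rightarrow> bool" where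
  "reach es s = (adj es s)\<^sup>*\<^sup>*"

definition comp :: "'v set \<Rightarrow> 'v set list \<Rightarrow> nat set \<Rightarrow> 'v \<Rightarrow> 'v set" where
  "comp V es s x = {y \<in> V. reach es s x y}"

definition comps :: "'v set \<Rightarrow> 'v set list \<Rightarrow> nat set \<Rightarrow> 'v set set" where
  "comps V es s = comp V es s ` V"

text \<open>An enhanced state (s, c) is encoded as (s, W) where W is the set of components
C with c(C) = 1 (weight x); the others have weight 1. Its bidegree is (|s|, |W|).\<close>
type_synonym 'v estate = "nat set \<times> 'v set set"

definition states :: "'v set \<Rightarrow> 'v set list \<Rightarrow> nat \<Rightarrow> nat \<Rightarrow> 'v estate set" where
  "states V es i j = {st. fst st \<subseteq> {..<length es} \<and> snd st \<subseteq> comps V es (fst st)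
      \<and> card (fst st) = i \<and> card (snd st) = j}"

text \<open>The partial differential d_k; None encodes the zero element.\<close>
definition dpart :: "'v set \<Rightarrow> 'v set list \<Rightarrow> nat \<Rightarrow> 'v estate \<Rightarrow> 'v estate option" where
  "dpart V es k st = (case st of (s, W) \<Rightarrow>
     (let T = {C \<in> comps V es s. C \<inter> (es ! k) \<noteq> {}} in
      if card T = 2 then
        (if T \<subseteq> W then None
         else Some (insert k s, (W - T) \<union> (if T \<inter> W \<noteq> {} then {\<Union>T} else {})))
      else Some (insert k s, W)))"

definition dsign :: "nat set \<Rightarrow> nat \<Rightarrow> int" where
  "dsign s k = (-1) ^ card {f \<in> s. f < k}"

definition dcoef :: "'v set \<Rightarrow> 'v set list \<Rightarrow> 'v estate \<Rightarrow> 'v estate \<Rightarrow> int" where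
  "dcoef V es \<sigma> \<tau> = (\<Sum>k\<in>{k. k < length es \<and> k \<notin> fst \<sigma>}.
                         if dpart V es k \<sigma> = Some \<tau> then dsign (fst \<sigma>) k else 0)"

definition chains :: "'v set \<Rightarrow> 'v set list \<Rightarrow> nat \<Rightarrow> nat \<Rightarrow> ('v estate \<Rightarrow> int) set" where
  "chains V es i j = {f. \<forall>\<sigma>. \<sigma> \<notin> states V es i j \<longrightarrow> f \<sigma> = 0}"

definition dif :: "'v set \<Rightarrow> 'v set list \<Rightarrow> nat \<Rightarrow> nat \<Rightarrow> ('v estate \<Rightarrow> int) \<Rightarrow> ('v estate \<Rightarrow> int)" where
  "dif V es i j f = (\<lambda>\<tau>. \<Sum>\<sigma>\<in>states V es i j. f \<sigma> * dcoef V es \<sigma> \<tau>)"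

definition cocycles :: "'v set \<Rightarrow> 'v set list \<Rightarrow> nat \<Rightarrow> nat \<Rightarrow> ('v estate \<Rightarrow> int) set" where
  "cocycles V es i j = {f \<in> chains V es i j. dif V es i j f = (\<lambda>_. 0)}"

definition coboundaries :: "'v set \<Rightarrow> 'v set list \<Rightarrow> nat \<Rightarrow> nat \<Rightarrow> ('v estate \<Rightarrow> int) set" where
  "coboundaries V es i j =
     (if i = 0 then {\<lambda>_. 0} else dif V es (i - 1) j ` chains V es (i - 1) j)"

definition cocycle_group :: "'v set \<Rightarrow> 'v set list \<Rightarrow> nat \<Rightarrow> nat \<Rightarrow> ('v estate \<Rightarrow> int) monoid" where
  "cocycle_group V es i j =
     \<lparr>carrier = cocycles V es i j, monoid.mult = (\<lambda>f g \<sigma>. f \<sigma> + g \<sigma>), one = (\<lambda>_. 0)\<rparr>"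

definition homology :: "'v set \<Rightarrow> 'v set list \<Rightarrow> nat \<Rightarrow> nat \<Rightarrow> ('v estate \<Rightarrow> int) set monoid" where
  "homology V es i j = cocycle_group V es i j Mod coboundaries V es i j"

definition connected_graph :: "'v set \<Rightarrow> 'v set list \<Rightarrow> bool" where
  "connected_graph V es \<longleftrightarrow> V \<noteq> {} \<and> (\<forall>x\<in>V. \<forall>y\<in>V. reach es {..<length es} x y)"

definition bipartite :: "'v set \<Rightarrow> 'v set list \<Rightarrow> bool" where
  "bipartite V es \<longleftrightarrow> (\<exists>A \<subseteq> V. \<forall>e\<in>set es. card (e \<inter> A) = 1)"

definition has_odd_cycle :: "'v set \<Rightarrow> 'v set list \<Rightarrow> bool" where
  "has_odd_cycle V es \<longleftrightarrow> (\<exists>cs. distinct cs \<and> set cs \<subseteq> V \<and> length cs \<ge> 3 \<and> odd (length cs) \<and>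
      (\<forall>i < length cs. {cs ! i, cs ! ((i + 1) mod length cs)} \<in> set es))"

definition Zpow :: "nat \<Rightarrow> (nat \<Rightarrow> int) monoid" where
  "Zpow p = sum_group {..<p} (\<lambda>_. integer_group)"

end

theory Submission
  imports Defs
begin

text \<open>Every enhanced state of bidegree \<open>(1, |V| - 1)\<close> is an edge with all components weighted
  \<open>x\<close>, and every state of bidegree \<open>(0, |V| - 1)\<close> is a vertex \<open>u\<close>, the only component of
  weight \<open>1\<close>. As \<open>x\<^sup>2 = 0\<close>, the differential vanishes in degree 1 and sends the state of \<open>u\<close> to
  the sum of the edges at \<open>u\<close>. So the cohomology group is the cokernel of the unsigned incidence
  map \<open>\<int>\<^sup>V \<rightarrow> \<int>\<^sup>E\<close>, \<open>y \<mapsto> (y a + y b)\<^sub>a\<^sub>b\<close>. Fix a breadth-first spanning tree with root \<open>r\<close>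
  and depth \<open>d\<close>. Solving the incidence equations along the tree reduces every element of \<open>\<int>\<^sup>E\<close>
  to one supported on the \<open>p\<^sub>1\<close> edges outside the tree, and there the image of the incidence map
  becomes \<open>\<int>s\<close> with \<open>s(ab) = (-1)\<^bsup>d a\<^esup> + (-1)\<^bsup>d b\<^esup> \<in> {0, \<plusminus>2}\<close>. For bipartite \<open>G\<close>, \<open>s = 0\<close>; an odd
  cycle forces \<open>s(e) = \<plusminus>2\<close> on some edge outside the tree, and then
  \<open>\<int>\<^bsup>p\<^sub>1\<^esup> / \<int>s \<cong> \<int>\<^bsup>p\<^sub>1 - 1\<^esup> \<oplus> \<int>/2\<close>.\<close>

section \<open>Quotients of \<open>\<int>\<^sup>E\<close> by a cyclic subgroup\<close>

lemma restrict_eq_restrict_iff: "restrict f A = restrict g A \<longleftrightarrow> (\<forall>x\<in>A. f x = g x)"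
  by (metis restrict_apply' restrict_ext)

lemma bij_betw_lessThan_card:
  assumes "finite E"
  obtains en where "bij_betw en {..<card E} E"
  using ex_bij_betw_nat_finite[OF assms] by (metis lessThan_atLeast0)

lemma carrier_Zpow: "carrier (Zpow n) = (\<Pi>\<^sub>E i\<in>{..<n}. UNIV)"
  by (auto simp: Zpow_def carrier_sum_group)

lemma group_Zpow: "group (Zpow n)"
  by (simp add: Zpow_def)

lemma mult_Zpow: "x \<otimes>\<^bsub>Zpow n\<^esub> y = (\<lambda>i\<in>{..<n}. x i + y i)"
  by (simp add: Zpow_def)

lemma one_Zpow: "\<one>\<^bsub>Zpow n\<^esub> = (\<lambda>i\<in>{..<n}. 0)"
  by (simp add: Zpow_def)

text \<open>\<open>\<Theta>\<close> induces an isomorphism \<open>\<int>\<^sup>E / \<int>v \<cong> H\<close>; elements of \<open>\<int>\<^sup>E\<close> are represented by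
  arbitrary functions \<open>nat \<Rightarrow> int\<close>, of which \<open>\<Theta>\<close> only sees the values on \<open>E\<close>.\<close>
locale quotient_hom =
  fixes E :: "nat set" and v :: "nat \<Rightarrow> int" and \<Theta> :: "(nat \<Rightarrow> int) \<Rightarrow> 'h"
    and H :: "('h, 'm) monoid_scheme"
  assumes group_H: "group H"
    and into: "\<Theta> g \<in> carrier H"
    and additive: "\<Theta> (\<lambda>e. g e + g' e) = \<Theta> g \<otimes>\<^bsub>H\<^esub> \<Theta> g'"
    and depends_on_E: "(\<And>e. e \<in> E \<Longrightarrow> g e = g' e) \<Longrightarrow> \<Theta> g = \<Theta> g'"
    and onto: "carrier H \<subseteq> range \<Theta>"
    and kernel: "\<Theta> g = \<one>\<^bsub>H\<^esub> \<longleftrightarrow> (\<exists>c. \<forall>e\<in>E. g e = c * v e)"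

lemma quotient_hom_Zpow:
  assumes "finite E"
  shows "\<exists>\<Theta>. quotient_hom E (\<lambda>_. 0) \<Theta> (Zpow (card E))"
proof -
  define n where "n = card E"
  obtain en where en: "bij_betw en {..<n} E"
    using bij_betw_lessThan_card[OF assms] unfolding n_def .
  define \<Theta> where "\<Theta> g = (\<lambda>i\<in>{..<n}. g (en i))" for g :: "nat \<Rightarrow> int"
  have onto: "h \<in> range \<Theta>" if "h \<in> carrier (Zpow n)" for h
  proof
    show "h = \<Theta> (\<lambda>e. h (inv_into {..<n} en e))"
      using that en unfolding \<Theta>_def carrier_Zpow
      by (auto simp: fun_eq_iff bij_betw_def inv_into_f_f PiE_def extensional_def)
  qed simp
  have kernel: "\<Theta> g = \<one>\<^bsub>Zpow n\<^esub> \<longleftrightarrow> (\<forall>e\<in>E. g e = 0)" for g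
  proof -
    have "\<Theta> g = \<one>\<^bsub>Zpow n\<^esub> \<longleftrightarrow> (\<forall>i\<in>{..<n}. g (en i) = 0)"
      by (simp add: \<Theta>_def one_Zpow restrict_eq_restrict_iff)
    also have "\<dots> \<longleftrightarrow> (\<forall>e\<in>E. g e = 0)"
      using en by (auto simp: bij_betw_def)
    finally show ?thesis .
  qed
  have "quotient_hom E (\<lambda>_. 0) \<Theta> (Zpow n)"
    unfolding quotient_hom_def
    using group_Zpow onto kernel bij_betwE[OF en]
    by (auto simp: \<Theta>_def carrier_Zpow mult_Zpow intro!: restrict_ext)
  then show ?thesis unfolding n_def by blast
qed

lemma multiples_of_double_unit_iff:
  fixes w :: "nat \<Rightarrow> int"
  assumes "e0 \<in> E" and "w e0 * w e0 = 1"
  shows "(\<exists>c. \<forall>e\<in>E. g e = c * (2 * w e)) \<longleftrightarrow> even (g e0) \<and> (\<forall>e\<in>E. g e = w e * w e0 * g e0)"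
proof
  assume "\<exists>c. \<forall>e\<in>E. g e = c * (2 * w e)"
  then obtain c where c: "\<And>e. e \<in> E \<Longrightarrow> g e = c * (2 * w e)" by blast
  have "g e = w e * w e0 * g e0" if "e \<in> E" for e
  proof -
    have "w e * w e0 * g e0 = c * (2 * w e) * (w e0 * w e0)"
      using c[OF assms(1)] by (simp add: algebra_simps)
    also have "\<dots> = g e"
      using c[OF that] assms(2) by simp
    finally show ?thesis by simp
  qed
  then show "even (g e0) \<and> (\<forall>e\<in>E. g e = w e * w e0 * g e0)"
    using c[OF assms(1)] by simp
next
  assume "even (g e0) \<and> (\<forall>e\<in>E. g e = w e * w e0 * g e0)"
  then obtain m where "g e0 = 2 * m" and g: "\<And>e. e \<in> E \<Longrightarrow> g e = w e * w e0 * g e0"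
    by (auto elim!: evenE)
  then have "\<forall>e\<in>E. g e = (m * w e0) * (2 * w e)"
    by (simp add: algebra_simps)
  then show "\<exists>c. \<forall>e\<in>E. g e = c * (2 * w e)" by blast
qed

lemma quotient_hom_Zpow_times_Z2:
  fixes w :: "nat \<Rightarrow> int"
  assumes "finite E" and "e0 \<in> E" and "w e0 * w e0 = 1"
  shows "\<exists>\<Theta>. quotient_hom E (\<lambda>e. 2 * w e) \<Theta> (Zpow (card E - 1) \<times>\<times> integer_mod_group 2)"
proof -
  define n where "n = card E - 1"
  obtain en where en: "bij_betw en {..<n} (E - {e0})"
    using bij_betw_lessThan_card[of "E - {e0}"] assms(1,2) unfolding n_def by auto
  \<comment> \<open>subtracting \<open>w e * w e0 * g e0\<close> makes the relation vector vanish off \<open>e0\<close>\<close>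
  define \<Theta> where
    "\<Theta> g = ((\<lambda>i\<in>{..<n}. g (en i) - w (en i) * w e0 * g e0), g e0 mod 2)" for g :: "nat \<Rightarrow> int"
  have en_E: "en i \<in> E - {e0}" if "i < n" for i
    using en that by (auto simp: bij_betw_def)
  have onto: "x \<in> range \<Theta>" if x_in: "x \<in> carrier (Zpow n \<times>\<times> integer_mod_group 2)" for x
  proof -
    obtain h t where x: "x = (h, t)" and h: "h \<in> carrier (Zpow n)" and t: "t \<in> {0..<2}"
      using x_in by (cases x) (auto simp: carrier_integer_mod_group)
    define g where "g e = (if e = e0 then t else h (inv_into {..<n} en e) + w e * w e0 * t)" for e
    have "\<Theta> g = x"
      using h t en_E en unfolding \<Theta>_def g_def x carrier_Zpow
      by (auto simp: fun_eq_iff bij_betw_def inv_into_f_f PiE_def extensional_def)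
    then show ?thesis by blast
  qed
  have kernel: "\<Theta> g = \<one>\<^bsub>Zpow n \<times>\<times> integer_mod_group 2\<^esub> \<longleftrightarrow> (\<exists>c. \<forall>e\<in>E. g e = c * (2 * w e))"
    for g
  proof -
    have "\<Theta> g = \<one>\<^bsub>Zpow n \<times>\<times> integer_mod_group 2\<^esub>
          \<longleftrightarrow> (\<forall>i\<in>{..<n}. g (en i) = w (en i) * w e0 * g e0) \<and> even (g e0)"
      by (simp add: \<Theta>_def one_Zpow restrict_eq_restrict_iff even_iff_mod_2_eq_zero)
    also have "\<dots> \<longleftrightarrow> (\<forall>e\<in>E - {e0}. g e = w e * w e0 * g e0) \<and> even (g e0)"
      using en unfolding bij_betw_def by (metis (no_types, lifting) image_iff)
    also have "\<dots> \<longleftrightarrow> even (g e0) \<and> (\<forall>e\<in>E. g e = w e * w e0 * g e0)"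
      using assms(2,3) by auto
    also have "\<dots> \<longleftrightarrow> (\<exists>c. \<forall>e\<in>E. g e = c * (2 * w e))"
      using multiples_of_double_unit_iff[of e0 E w g, OF assms(2,3)] by simp
    finally show ?thesis .
  qed
  have "quotient_hom E (\<lambda>e. 2 * w e) \<Theta> (Zpow n \<times>\<times> integer_mod_group 2)"
    unfolding quotient_hom_def
    using group_Zpow onto kernel en_E assms(2)
    by (auto simp: \<Theta>_def carrier_Zpow mult_Zpow carrier_integer_mod_group mod_add_eq distrib_left
             intro!: DirProd_group restrict_ext)
  then show ?thesis unfolding n_def by blast
qed

section \<open>Enhanced states of bidegrees \<open>(0, |V| - 1)\<close> and \<open>(1, |V| - 1)\<close>\<close>

lemma dif_add: "dif V es i j (\<lambda>\<sigma>. f \<sigma> + g \<sigma>) = (\<lambda>\<tau>. dif V es i j f \<tau> + dif V es i j g \<tau>)"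
  by (simp add: dif_def distrib_right sum.distrib)

lemma dif_uminus: "dif V es i j (\<lambda>\<sigma>. - f \<sigma>) = (\<lambda>\<tau>. - dif V es i j f \<tau>)"
  by (simp add: dif_def sum_negf)

lemma group_cocycle_group: "group (cocycle_group V es i j)"
proof (rule groupI)
  fix f g assume "f \<in> carrier (cocycle_group V es i j)" "g \<in> carrier (cocycle_group V es i j)"
  then show "f \<otimes>\<^bsub>cocycle_group V es i j\<^esub> g \<in> carrier (cocycle_group V es i j)"
    by (simp add: cocycle_group_def cocycles_def chains_def dif_add)
next
  fix f assume "f \<in> carrier (cocycle_group V es i j)"
  then have "(\<lambda>\<sigma>. - f \<sigma>) \<in> carrier (cocycle_group V es i j)
      \<and> (\<lambda>\<sigma>. - f \<sigma>) \<otimes>\<^bsub>cocycle_group V es i j\<^esub> f = \<one>\<^bsub>cocycle_group V es i j\<^esub>"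
    by (simp add: cocycle_group_def cocycles_def chains_def dif_uminus)
  then show "\<exists>g\<in>carrier (cocycle_group V es i j). g \<otimes>\<^bsub>cocycle_group V es i j\<^esub> f
      = \<one>\<^bsub>cocycle_group V es i j\<^esub>"
    by blast
qed (auto simp: cocycle_group_def cocycles_def chains_def dif_def add.assoc)

locale finite_simple_graph =
  fixes V :: "'v set" and es :: "'v set list"
  assumes simple: "simple_graph V es"
begin

lemma finite_V: "finite V"
  using simple by (simp add: simple_graph_def)

lemma distinct_es: "distinct es"
  using simple by (simp add: simple_graph_def)

lemma card_edge: "k < length es \<Longrightarrow> card (es ! k) = 2"
  using simple by (simp add: simple_graph_def)

lemma edge_endpoints:
  assumes "k < length es"
  obtains a b where "a \<noteq> b" "es ! k = {a, b}" "a \<in> V" "b \<in> V"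
proof -
  have "es ! k \<subseteq> V" "card (es ! k) = 2"
    using simple assms by (auto simp: simple_graph_def)
  then show ?thesis
    using that by (auto simp: card_2_iff)
qed

lemma edge_subset: "k < length es \<Longrightarrow> es ! k \<subseteq> V"
  by (metis edge_endpoints empty_subsetI insert_subset)

lemma reach_empty: "reach es {} x y \<longleftrightarrow> x = y"
proof -
  have "adj es {} = (\<lambda>_ _. False)"
    by (auto simp: adj_def fun_eq_iff)
  moreover have "(\<lambda>_ _. False)\<^sup>*\<^sup>* x y \<Longrightarrow> x = y"
    by (induction rule: rtranclp_induct) auto
  ultimately show ?thesis
    by (auto simp: reach_def)
qed

lemma reach_single_edge:
  assumes k: "k < length es"
  shows "reach es {k} x y \<longleftrightarrow> x = y \<or> es ! k = {x, y}"
proof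
  have adj: "adj es {k} a b \<longleftrightarrow> es ! k = {a, b}" for a b
    using k by (auto simp: adj_def)
  assume "reach es {k} x y"
  then have "(adj es {k})\<^sup>*\<^sup>* x y"
    by (simp add: reach_def)
  then show "x = y \<or> es ! k = {x, y}"
  proof (induction rule: rtranclp_induct)
    case (step y z)
    moreover obtain a b where "a \<noteq> b" "es ! k = {a, b}"
      using edge_endpoints[OF k] by blast
    ultimately show ?case
      using adj by (auto simp: doubleton_eq_iff)
  qed simp
next
  assume "x = y \<or> es ! k = {x, y}"
  then show "reach es {k} x y"
    unfolding reach_def using k by (auto simp: adj_def)
qed

lemma comps_empty: "comps V es {} = (\<lambda>x. {x}) ` V"
  by (auto simp: comps_def comp_def reach_empty)

lemma comps_single_edge:
  assumes k: "k < length es"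
  shows "comps V es {k} = insert (es ! k) ((\<lambda>x. {x}) ` (V - es ! k))"
proof -
  obtain a b where ab: "a \<noteq> b" "es ! k = {a, b}" "a \<in> V" "b \<in> V"
    using edge_endpoints[OF k] by blast
  have "comp V es {k} x = (if x \<in> es ! k then es ! k else {x})" if "x \<in> V" for x
    using ab that by (auto simp: comp_def reach_single_edge[OF k] doubleton_eq_iff)
  then show ?thesis
    using ab by (auto simp: comps_def image_def)
qed

lemma card_comps_single_edge:
  assumes k: "k < length es"
  shows "card (comps V es {k}) = card V - 1"
proof -
  obtain a b where ab: "a \<noteq> b" "es ! k = {a, b}" "a \<in> V" "b \<in> V"
    using edge_endpoints[OF k] by blast
  have "card ((\<lambda>x. {x}) ` (V - es ! k)) = card V - 2"
    using ab finite_V by (simp add: card_image card_Diff_subset)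
  moreover have "card V \<ge> 2"
    using ab finite_V by (metis card_2_iff card_mono empty_subsetI insert_subset)
  moreover have "es ! k \<notin> (\<lambda>x. {x}) ` (V - es ! k)"
    using ab by auto
  ultimately show ?thesis
    unfolding comps_single_edge[OF k] using finite_V by simp
qed

definition edge_state :: "nat \<Rightarrow> 'v estate" where
  "edge_state k = ({k}, comps V es {k})"

definition vertex_state :: "'v \<Rightarrow> 'v estate" where
  "vertex_state u = ({}, (\<lambda>x. {x}) ` (V - {u}))"

lemma inj_edge_state: "inj edge_state"
  by (auto simp: inj_def edge_state_def)

lemma inj_on_vertex_state: "inj_on vertex_state V"
proof (rule inj_onI)
  fix u w assume "u \<in> V" "vertex_state u = vertex_state w"
  then have "\<Union> ((\<lambda>x. {x}) ` (V - {u})) = \<Union> ((\<lambda>x. {x}) ` (V - {w}))"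
    by (simp add: vertex_state_def)
  then have "V - {u} = V - {w}"
    by simp
  then show "u = w"
    using \<open>u \<in> V\<close> by blast
qed

lemma states_1: "states V es 1 (card V - 1) = edge_state ` {..<length es}"
proof (intro equalityI subsetI)
  fix st assume st: "st \<in> states V es 1 (card V - 1)"
  obtain s W where st_eq: "st = (s, W)"
    by (cases st)
  have s: "s \<subseteq> {..<length es}" "card s = 1" and W: "W \<subseteq> comps V es s" "card W = card V - 1"
    using st by (simp_all add: st_eq states_def)
  then obtain k where k: "s = {k}" "k < length es"
    by (auto simp: card_1_singleton_iff)
  have "finite (comps V es {k})"
    using finite_V by (simp add: comps_def)
  then have "W = comps V es {k}"
    using W card_comps_single_edge[OF k(2)] unfolding k(1) by (simp add: card_subset_eq)
  then show "st \<in> edge_state ` {..<length es}"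
    using st_eq k by (simp add: edge_state_def)
next
  fix st assume "st \<in> edge_state ` {..<length es}"
  then obtain k where "k < length es" "st = edge_state k"
    by blast
  then show "st \<in> states V es 1 (card V - 1)"
    by (simp add: edge_state_def states_def card_comps_single_edge)
qed

lemma states_0:
  assumes "V \<noteq> {}"
  shows "states V es 0 (card V - 1) = vertex_state ` V"
proof (intro equalityI subsetI)
  fix st assume st: "st \<in> states V es 0 (card V - 1)"
  obtain s W where st_eq: "st = (s, W)"
    by (cases st)
  have s: "s = {}" and W: "W \<subseteq> (\<lambda>x. {x}) ` V" "card W = card V - 1"
    using st finite_V by (auto simp: st_eq states_def comps_empty finite_subset)
  have "finite ((\<lambda>x. {x}) ` V)" "card ((\<lambda>x. {x}) ` V) = card V"
    using finite_V by (auto simp: card_image)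
  then have "card ((\<lambda>x. {x}) ` V - W) = 1"
    using W assms finite_V by (simp add: card_Diff_subset finite_subset card_gt_0_iff Suc_leI)
  then obtain C where C: "(\<lambda>x. {x}) ` V - W = {C}"
    by (auto simp: card_1_singleton_iff)
  then obtain u where u: "u \<in> V" "C = {u}"
    by blast
  have "W = (\<lambda>x. {x}) ` V - {{u}}"
    using C u W(1) by blast
  also have "\<dots> = (\<lambda>x. {x}) ` (V - {u})"
    by auto
  finally show "st \<in> vertex_state ` V"
    using st_eq s u(1) by (simp add: vertex_state_def)
next
  fix st assume "st \<in> vertex_state ` V"
  then obtain u where "u \<in> V" "st = vertex_state u"
    by blast
  moreover have "card ((\<lambda>x. {x}) ` (V - {u})) = card V - 1" if "u \<in> V"
    using that finite_V by (simp add: card_image)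
  ultimately show "st \<in> states V es 0 (card V - 1)"
    by (auto simp: vertex_state_def states_def comps_empty)
qed

text \<open>Merging the unweighted vertex \<open>u\<close> with a neighbour gives weight \<open>x\<close>; any other edge
  merges two components of weight \<open>x\<close>, and \<open>x\<^sup>2 = 0\<close>.\<close>
lemma dpart_vertex_state:
  assumes k: "k < length es" and u: "u \<in> V"
  shows "dpart V es k (vertex_state u) = (if u \<in> es ! k then Some (edge_state k) else None)"
proof -
  obtain a b where ab: "a \<noteq> b" "es ! k = {a, b}" "a \<in> V" "b \<in> V"
    using edge_endpoints[OF k] by blast
  define T where "T = {C \<in> comps V es {}. C \<inter> es ! k \<noteq> {}}"
  define W where "W = (\<lambda>x. {x}) ` (V - {u})"
  have "T = {{a}, {b}}"
    unfolding T_def comps_empty using ab by auto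
  then have T: "T = {{a}, {b}}" "card T = 2"
    using ab by auto
  show ?thesis
  proof (cases "u \<in> es ! k")
    case True
    then have "\<not> T \<subseteq> W" "T \<inter> W \<noteq> {}"
      using T ab unfolding W_def by auto
    moreover have "W - T \<union> {\<Union>T} = comps V es {k}"
      unfolding comps_single_edge[OF k] W_def using T ab True by auto
    ultimately show ?thesis
      using True T unfolding dpart_def vertex_state_def edge_state_def Let_def
      by (simp add: T_def[symmetric] W_def[symmetric])
  next
    case False
    then have "T \<subseteq> W"
      using T ab unfolding W_def by auto
    then show ?thesis
      using False T unfolding dpart_def vertex_state_def Let_def
      by (simp add: T_def[symmetric] W_def[symmetric])
  qed
qed

text \<open>As \<open>es\<close> is duplicate-free, edge \<open>k\<close> joins two components of \<open>[G:{j}]\<close>, both of weight \<open>x\<close>.\<close>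
lemma dpart_edge_state:
  assumes k: "k < length es" and j: "j < length es" and "k \<noteq> j"
  shows "dpart V es k (edge_state j) = None"
proof -
  obtain a b where ab: "a \<noteq> b" "es ! k = {a, b}"
    using edge_endpoints[OF k] by blast
  have card_k: "card (es ! k) = 2" and card_j: "card (es ! j) = 2"
    using card_edge k j by blast+
  have "es ! k \<noteq> es ! j"
    using distinct_es k j \<open>k \<noteq> j\<close> by (simp add: nth_eq_iff_index_eq)
  then have "\<not> es ! k \<subseteq> es ! j"
    using card_k card_j card_subset_eq[of "es ! j" "es ! k"] by (metis card.infinite zero_neq_numeral)
  then have not_both: "\<not> (a \<in> es ! j \<and> b \<in> es ! j)"
    using ab by simp
  define T where "T = {C \<in> comps V es {j}. C \<inter> es ! k \<noteq> {}}"
  have "T = (\<lambda>x. {x}) ` ({a, b} - es ! j) \<union> (if a \<in> es ! j \<or> b \<in> es ! j then {es ! j} else {})"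
    using edge_subset[OF k] ab unfolding T_def comps_single_edge[OF j] by auto
  moreover consider "a \<notin> es ! j" "b \<notin> es ! j" | "a \<in> es ! j" "b \<notin> es ! j" | "a \<notin> es ! j" "b \<in> es ! j"
    using not_both by blast
  ultimately have "card T = 2"
    using ab card_j by cases (auto simp: card_insert_if insert_Diff_if)
  then show ?thesis
    unfolding dpart_def edge_state_def T_def by simp
qed

lemma cocycles_1: "cocycles V es 1 (card V - 1) = chains V es 1 (card V - 1)"
proof -
  have dcoef_edge_state: "dcoef V es (edge_state j) \<tau> = 0" if "j < length es" for j \<tau>
    unfolding dcoef_def edge_state_def[of j]
    by (rule sum.neutral) (auto simp: dpart_edge_state[OF _ that, unfolded edge_state_def])
  have "dif V es 1 (card V - 1) f \<tau> = 0" for f \<tau>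
    unfolding dif_def states_1 by (rule sum.neutral) (auto simp: dcoef_edge_state)
  then have "dif V es 1 (card V - 1) f = (\<lambda>_. 0)" for f
    by blast
  then show ?thesis
    unfolding cocycles_def by blast
qed

text \<open>\<open>edge_sum\<close> is the unsigned incidence map \<open>\<int>\<^sup>V \<rightarrow> \<int>\<^sup>E\<close>; \<open>edge_coeffs\<close> and \<open>edge_cochain\<close> identify
  \<open>C\<^bsup>1,|V|-1\<^esup>\<close> with the functions on edge indices vanishing from \<open>length es\<close> on.\<close>
definition edge_sum :: "('v \<Rightarrow> int) \<Rightarrow> nat \<Rightarrow> int" where
  "edge_sum y k = (if k < length es then \<Sum>u\<in>es ! k. y u else 0)"

definition edge_coeffs :: "('v estate \<Rightarrow> int) \<Rightarrow> nat \<Rightarrow> int" where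
  "edge_coeffs f k = (if k < length es then f (edge_state k) else 0)"

definition edge_cochain :: "(nat \<Rightarrow> int) \<Rightarrow> 'v estate \<Rightarrow> int" where
  "edge_cochain h t = (if t \<in> edge_state ` {..<length es} then h (the_elem (fst t)) else 0)"

lemma edge_sum_cong:
  assumes "\<And>u. u \<in> V \<Longrightarrow> y u = y' u"
  shows "edge_sum y = edge_sum y'"
proof
  fix k
  have "(\<Sum>u\<in>es ! k. y u) = (\<Sum>u\<in>es ! k. y' u)" if "k < length es"
    using assms edge_subset[OF that] by (intro sum.cong) auto
  then show "edge_sum y k = edge_sum y' k"
    by (simp add: edge_sum_def)
qed

lemma edge_sum_vanishes: "k \<ge> length es \<Longrightarrow> edge_sum y k = 0"
  by (simp add: edge_sum_def)

lemma edge_sum_linear: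
  "edge_sum (\<lambda>u. a * y u + b * z u) k = a * edge_sum y k + b * edge_sum z k"
  by (simp add: edge_sum_def sum.distrib sum_distrib_left)

lemma edge_coeffs_edge_cochain:
  assumes "\<And>k. k \<ge> length es \<Longrightarrow> h k = 0"
  shows "edge_coeffs (edge_cochain h) = h"
proof
  fix k
  show "edge_coeffs (edge_cochain h) k = h k"
    using assms[of k] by (simp add: edge_coeffs_def edge_cochain_def edge_state_def)
qed

lemma edge_cochain_in_chains: "edge_cochain h \<in> chains V es 1 (card V - 1)"
  unfolding chains_def states_1 by (simp add: edge_cochain_def)

lemma edge_cochain_edge_coeffs:
  assumes "f \<in> chains V es 1 (card V - 1)"
  shows "edge_cochain (edge_coeffs f) = f"
proof
  fix t
  show "edge_cochain (edge_coeffs f) t = f t"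
  proof (cases "t \<in> edge_state ` {..<length es}")
    case True
    then obtain k where "k < length es" "t = edge_state k"
      by blast
    then show ?thesis
      by (simp add: edge_cochain_def edge_coeffs_def edge_state_def)
  next
    case False
    then have "f t = 0"
      using assms unfolding chains_def states_1 by blast
    then show ?thesis
      using False by (simp add: edge_cochain_def)
  qed
qed

lemma dcoef_vertex_state:
  assumes "u \<in> V"
  shows "dcoef V es (vertex_state u) t = (\<Sum>k<length es. if u \<in> es ! k \<and> t = edge_state k then 1 else 0)"
proof -
  have "{k. k < length es \<and> k \<notin> fst (vertex_state u)} = {..<length es}"
    by (auto simp: vertex_state_def)
  moreover have "dsign (fst (vertex_state u)) k = 1" for k
    by (simp add: vertex_state_def dsign_def)
  ultimately show ?thesis
    unfolding dcoef_def using assms by (intro sum.cong) (auto simp: dpart_vertex_state)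
qed

lemma dif_0:
  assumes "V \<noteq> {}"
  shows "dif V es 0 (card V - 1) g = edge_cochain (edge_sum (\<lambda>u. g (vertex_state u)))"
proof
  fix t
  have dif: "dif V es 0 (card V - 1) g t = (\<Sum>u\<in>V. g (vertex_state u) * dcoef V es (vertex_state u) t)"
    unfolding dif_def states_0[OF assms] by (simp add: sum.reindex[OF inj_on_vertex_state])
  show "dif V es 0 (card V - 1) g t = edge_cochain (edge_sum (\<lambda>u. g (vertex_state u))) t"
  proof (cases "t \<in> edge_state ` {..<length es}")
    case True
    then obtain j where j: "j < length es" "t = edge_state j"
      by blast
    have "dcoef V es (vertex_state u) t = (if u \<in> es ! j then 1 else 0)" if "u \<in> V" for u
    proof -
      have "dcoef V es (vertex_state u) t = (\<Sum>k<length es. if k = j then (if u \<in> es ! j then 1 else 0) else 0)"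
        unfolding dcoef_vertex_state[OF that] j(2) by (intro sum.cong) (auto simp: inj_edge_state inj_eq)
      then show ?thesis
        using j(1) by simp
    qed
    then have "dif V es 0 (card V - 1) g t = (\<Sum>u\<in>V. if u \<in> es ! j then g (vertex_state u) else 0)"
      unfolding dif by (intro sum.cong) auto
    also have "\<dots> = (\<Sum>u\<in>es ! j. g (vertex_state u))"
      using edge_subset[OF j(1)] finite_V by (simp add: sum.If_cases Int_absorb1)
    finally show ?thesis
      using j by (simp add: edge_cochain_def edge_sum_def edge_state_def)
  next
    case False
    then have "dcoef V es (vertex_state u) t = 0" if "u \<in> V" for u
      unfolding dcoef_vertex_state[OF that] by (intro sum.neutral) auto
    then show ?thesis
      using False unfolding dif by (simp add: edge_cochain_def)
  qed
qed

lemma coboundaries_1: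
  assumes "V \<noteq> {}"
  shows "coboundaries V es 1 (card V - 1) = edge_cochain ` range edge_sum"
proof (intro equalityI subsetI)
  fix f assume "f \<in> coboundaries V es 1 (card V - 1)"
  then obtain g where "f = dif V es 0 (card V - 1) g"
    by (auto simp: coboundaries_def)
  then show "f \<in> edge_cochain ` range edge_sum"
    unfolding dif_0[OF assms] by blast
next
  fix f assume "f \<in> edge_cochain ` range edge_sum"
  then obtain y where f: "f = edge_cochain (edge_sum y)"
    by blast
  define g where "g \<sigma> = (if \<sigma> \<in> vertex_state ` V then y (inv_into V vertex_state \<sigma>) else 0)" for \<sigma>
  have "g \<in> chains V es 0 (card V - 1)"
    unfolding chains_def states_0[OF assms] by (simp add: g_def)
  then have "dif V es 0 (card V - 1) g \<in> coboundaries V es 1 (card V - 1)"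
    by (simp add: coboundaries_def)
  moreover have "edge_sum (\<lambda>u. g (vertex_state u)) = edge_sum y"
    by (rule edge_sum_cong) (simp add: g_def inv_into_f_f[OF inj_on_vertex_state])
  then have "dif V es 0 (card V - 1) g = f"
    unfolding f dif_0[OF assms] by simp
  ultimately show "f \<in> coboundaries V es 1 (card V - 1)"
    by simp
qed

lemma coboundaries_1_subset:
  assumes "V \<noteq> {}"
  shows "coboundaries V es 1 (card V - 1) \<subseteq> chains V es 1 (card V - 1)"
  unfolding coboundaries_1[OF assms] using edge_cochain_in_chains by blast

lemma coboundaries_1_iff:
  assumes "V \<noteq> {}" and f: "f \<in> chains V es 1 (card V - 1)"
  shows "f \<in> coboundaries V es 1 (card V - 1) \<longleftrightarrow> edge_coeffs f \<in> range edge_sum"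
proof
  assume "f \<in> coboundaries V es 1 (card V - 1)"
  then obtain y where "f = edge_cochain (edge_sum y)"
    unfolding coboundaries_1[OF assms(1)] by blast
  then have "edge_coeffs f = edge_sum y"
    by (simp add: edge_coeffs_edge_cochain edge_sum_vanishes)
  then show "edge_coeffs f \<in> range edge_sum"
    by blast
next
  assume "edge_coeffs f \<in> range edge_sum"
  then obtain y where "edge_coeffs f = edge_sum y"
    by blast
  then have "f = edge_cochain (edge_sum y)"
    using edge_cochain_edge_coeffs[OF f] by simp
  then show "f \<in> coboundaries V es 1 (card V - 1)"
    unfolding coboundaries_1[OF assms(1)] by blast
qed

lemma edge_coeffs_add: "edge_coeffs (\<lambda>\<sigma>. f \<sigma> + g \<sigma>) = (\<lambda>k. edge_coeffs f k + edge_coeffs g k)"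
  by (simp add: edge_coeffs_def fun_eq_iff)

lemma edge_coeffs_vanish: "\<forall>k\<ge>length es. edge_coeffs f k = 0"
  by (simp add: edge_coeffs_def)

lemma carrier_cocycle_group_1: "carrier (cocycle_group V es 1 (card V - 1)) = chains V es 1 (card V - 1)"
  unfolding cocycle_group_def cocycles_1 by simp

lemma homology_iso_edge_quotient:
  assumes "V \<noteq> {}" and "group H"
    and into: "\<And>h. \<Theta> h \<in> carrier H"
    and additive: "\<And>h h'. \<Theta> (\<lambda>k. h k + h' k) = \<Theta> h \<otimes>\<^bsub>H\<^esub> \<Theta> h'"
    and onto: "\<And>x. x \<in> carrier H \<Longrightarrow> \<exists>h. (\<forall>k\<ge>length es. h k = 0) \<and> \<Theta> h = x"
    and kernel: "\<And>h. \<forall>k\<ge>length es. h k = 0 \<Longrightarrow> \<Theta> h = \<one>\<^bsub>H\<^esub> \<longleftrightarrow> h \<in> range edge_sum"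
  shows "homology V es 1 (card V - 1) \<cong> H"
proof -
  let ?G = "cocycle_group V es 1 (card V - 1)"
  let ?\<Psi> = "\<lambda>f. \<Theta> (edge_coeffs f)"
  have "?\<Psi> \<in> hom ?G H"
    by (rule homI) (simp_all add: into additive cocycle_group_def edge_coeffs_add)
  then interpret group_hom ?G H ?\<Psi>
    using group_cocycle_group \<open>group H\<close> by (simp add: group_hom_def group_hom_axioms_def)
  have "?\<Psi> ` carrier ?G = carrier H"
  proof (intro equalityI subsetI)
    fix x assume "x \<in> carrier H"
    then obtain h where "\<forall>k\<ge>length es. h k = 0" "\<Theta> h = x"
      using onto by blast
    then have "x = ?\<Psi> (edge_cochain h)"
      by (simp add: edge_coeffs_edge_cochain)
    then show "x \<in> ?\<Psi> ` carrier ?G"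
      using edge_cochain_in_chains carrier_cocycle_group_1 by blast
  qed (use into in blast)
  moreover have "kernel ?G H ?\<Psi> = coboundaries V es 1 (card V - 1)"
  proof (intro equalityI subsetI)
    fix f assume "f \<in> kernel ?G H ?\<Psi>"
    then have f: "f \<in> chains V es 1 (card V - 1)" "?\<Psi> f = \<one>\<^bsub>H\<^esub>"
      unfolding kernel_def carrier_cocycle_group_1 by blast+
    then show "f \<in> coboundaries V es 1 (card V - 1)"
      using kernel[OF edge_coeffs_vanish] coboundaries_1_iff[OF assms(1) f(1)] by blast
  next
    fix f assume f: "f \<in> coboundaries V es 1 (card V - 1)"
    then have chain: "f \<in> chains V es 1 (card V - 1)"
      using coboundaries_1_subset[OF assms(1)] by blast
    then have "?\<Psi> f = \<one>\<^bsub>H\<^esub>"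
      using kernel[OF edge_coeffs_vanish] coboundaries_1_iff[OF assms(1) chain] f by blast
    then show "f \<in> kernel ?G H ?\<Psi>"
      unfolding kernel_def carrier_cocycle_group_1 using chain by blast
  qed
  ultimately show ?thesis
    using FactGroup_iso by (simp add: homology_def)
qed

end

section \<open>Reduction along a spanning tree\<close>

lemma card_doubleton_Int_eq_1_iff:
  assumes "a \<noteq> b"
  shows "card ({a, b} \<inter> A) = 1 \<longleftrightarrow> (a \<in> A \<longleftrightarrow> b \<notin> A)"
  using assms by (cases "a \<in> A"; cases "b \<in> A") (auto simp: Int_insert_left)

lemma odd_cycle_monochromatic_edge:
  fixes es :: "'v set list" and P :: "'v \<Rightarrow> bool"
  assumes "has_odd_cycle V es"
  shows "\<exists>a b. {a, b} \<in> set es \<and> a \<noteq> b \<and> P a = P b"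
proof (rule ccontr)
  assume "\<not> ?thesis"
  then have bichromatic: "P a \<noteq> P b" if "{a, b} \<in> set es" "a \<noteq> b" for a b
    using that by blast
  obtain cs where cs: "distinct cs" "length cs \<ge> 3" "odd (length cs)"
    and edges: "\<And>i. i < length cs \<Longrightarrow> {cs ! i, cs ! ((i + 1) mod length cs)} \<in> set es"
    using assms by (auto simp: has_odd_cycle_def)
  define n where "n = length cs"
  have step: "P (cs ! i) \<noteq> P (cs ! Suc i)" if "Suc i < n" for i
    using that edges[of i] cs(1) bichromatic by (auto simp: n_def nth_eq_iff_index_eq)
  have alternate: "P (cs ! i) \<longleftrightarrow> (P (cs ! 0) \<longleftrightarrow> even i)" if "i < n" for i
    using that by (induction i) (use step in auto)
  have last: "n - 1 < n" "n - 1 + 1 = n" "n - 1 \<noteq> 0"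
    using cs(2) by (auto simp: n_def)
  then have "{cs ! (n - 1), cs ! 0} \<in> set es"
    using edges[of "n - 1"] unfolding n_def by (metis mod_self)
  moreover have "cs ! (n - 1) \<noteq> cs ! 0"
    using last nth_eq_iff_index_eq[OF cs(1)] unfolding n_def by (metis gr0I less_nat_zero_code)
  moreover have "P (cs ! (n - 1)) = P (cs ! 0)"
    using alternate[of "n - 1"] cs(2,3) by (simp add: n_def)
  ultimately show False
    using bichromatic by blast
qed

locale connected_simple_graph = finite_simple_graph V es for V :: "'v set" and es +
  assumes connected: "connected_graph V es"
begin

lemma V_nonempty: "V \<noteq> {}"
  using connected by (simp add: connected_graph_def)

definition root :: 'v where
  "root = (SOME r. r \<in> V)"

lemma root_in_V: "root \<in> V"
  unfolding root_def using V_nonempty by (simp add: some_in_eq)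

definition depth :: "'v \<Rightarrow> nat" where
  "depth u = (LEAST n. (adj es {..<length es} ^^ n) root u)"

lemma depth_walk:
  assumes "u \<in> V"
  shows "(adj es {..<length es} ^^ depth u) root u"
proof -
  have "reach es {..<length es} root u"
    using connected root_in_V assms by (simp add: connected_graph_def)
  then have "\<exists>n. (adj es {..<length es} ^^ n) root u"
    by (simp add: reach_def rtranclp_power)
  then show ?thesis
    unfolding depth_def by (rule LeastI_ex)
qed

lemma depth_le: "(adj es {..<length es} ^^ n) root u \<Longrightarrow> depth u \<le> n"
  unfolding depth_def by (rule Least_le)

lemma depth_root: "depth root = 0"
  using depth_le[of 0 root] by simp

lemma depth_eq_0_iff: "u \<in> V \<Longrightarrow> depth u = 0 \<longleftrightarrow> u = root"
  using depth_walk[of u] depth_root by auto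

lemma parent_exists:
  assumes u: "u \<in> V" "u \<noteq> root"
  shows "\<exists>k w. k < length es \<and> es ! k = {u, w} \<and> w \<in> V \<and> Suc (depth w) = depth u"
proof -
  obtain m where m: "depth u = Suc m"
    using depth_eq_0_iff[OF u(1)] u(2) by (cases "depth u") auto
  then have "(adj es {..<length es} ^^ Suc m) root u"
    using depth_walk[OF u(1)] by simp
  then obtain w where w: "(adj es {..<length es} ^^ m) root w" "adj es {..<length es} w u"
    by (rule relpowp_Suc_E)
  then obtain k where k: "k < length es" "es ! k = {w, u}"
    by (auto simp: adj_def)
  have "w \<in> V"
    using edge_subset[OF k(1)] k(2) by auto
  have "depth w \<le> m"
    using depth_le[OF w(1)] .
  moreover have "depth u \<le> Suc (depth w)"
    using depth_le[OF relpowp_Suc_I[OF depth_walk[OF \<open>w \<in> V\<close>] w(2)]] .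
  ultimately have "Suc (depth w) = depth u"
    using m by simp
  then show ?thesis
    using k \<open>w \<in> V\<close> by (metis insert_commute)
qed

definition parent_link :: "'v \<Rightarrow> nat \<times> 'v" where
  "parent_link u = (SOME (k, w). k < length es \<and> es ! k = {u, w} \<and> w \<in> V \<and> Suc (depth w) = depth u)"

definition parent_edge :: "'v \<Rightarrow> nat" where
  "parent_edge u = fst (parent_link u)"

definition parent :: "'v \<Rightarrow> 'v" where
  "parent u = snd (parent_link u)"

lemma parent:
  assumes "u \<in> V" "u \<noteq> root"
  shows "parent_edge u < length es" "es ! parent_edge u = {u, parent u}" "parent u \<in> V"
    "Suc (depth (parent u)) = depth u"
proof -
  have "(\<lambda>(k, w). k < length es \<and> es ! k = {u, w} \<and> w \<in> V \<and> Suc (depth w) = depth u) (parent_link u)"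
    unfolding parent_link_def by (rule someI_ex) (use parent_exists[OF assms] in auto)
  then show "parent_edge u < length es" "es ! parent_edge u = {u, parent u}" "parent u \<in> V"
    "Suc (depth (parent u)) = depth u"
    by (auto simp: parent_edge_def parent_def split: prod.splits)
qed

lemma parent_neq: "u \<in> V \<Longrightarrow> u \<noteq> root \<Longrightarrow> parent u \<noteq> u"
  using parent(4) by fastforce

lemma depth_induct [consumes 1, case_names step]:
  assumes "u \<in> V"
    and "\<And>u. u \<in> V \<Longrightarrow> (\<And>w. w \<in> V \<Longrightarrow> depth w < depth u \<Longrightarrow> P w) \<Longrightarrow> P u"
  shows "P u"
  using assms(1)
proof (induction u rule: measure_induct_rule[of depth])
  case (less u)
  then show ?case
    using assms(2) by blast
qed

primrec alternating_path_sum :: "(nat \<Rightarrow> int) \<Rightarrow> nat \<Rightarrow> 'v \<Rightarrow> int" where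
  "alternating_path_sum f 0 u = 0"
| "alternating_path_sum f (Suc n) u = f (parent_edge u) - alternating_path_sum f n (parent u)"

text \<open>The solution \<open>y\<close> of \<open>y root = 0\<close> and \<open>y u + y (parent u) = f (parent_edge u)\<close>,
  i.e. of the incidence equations of the spanning tree.\<close>
definition tree_potential :: "(nat \<Rightarrow> int) \<Rightarrow> 'v \<Rightarrow> int" where
  "tree_potential f u = alternating_path_sum f (depth u) u"

lemma tree_potential_root: "tree_potential f root = 0"
  by (simp add: tree_potential_def depth_root)

lemma tree_potential_parent:
  assumes "u \<in> V" "u \<noteq> root"
  shows "tree_potential f u = f (parent_edge u) - tree_potential f (parent u)"
  unfolding tree_potential_def parent(4)[OF assms, symmetric] by simp

lemma tree_potential_linear:
  "tree_potential (\<lambda>k. a * f k + b * g k) = (\<lambda>u. a * tree_potential f u + b * tree_potential g u)"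
proof -
  have "alternating_path_sum (\<lambda>k. a * f k + b * g k) n u
      = a * alternating_path_sum f n u + b * alternating_path_sum g n u" for n u
    by (induction n arbitrary: u) (simp_all add: algebra_simps)
  then show ?thesis
    by (simp add: tree_potential_def fun_eq_iff)
qed

definition tree_edges :: "nat set" where
  "tree_edges = parent_edge ` (V - {root})"

definition cotree_edges :: "nat set" where
  "cotree_edges = {..<length es} - tree_edges"

lemma inj_on_parent_edge: "inj_on parent_edge (V - {root})"
proof (rule inj_onI)
  fix u w assume u: "u \<in> V - {root}" and w: "w \<in> V - {root}" and eq: "parent_edge u = parent_edge w"
  show "u = w"
  proof (rule ccontr)
    assume "u \<noteq> w"
    have "{u, parent u} = {w, parent w}"
      using parent(2)[of u] parent(2)[of w] u w eq by simp
    then have "u = parent w" "w = parent u"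
      using \<open>u \<noteq> w\<close> by (auto simp: doubleton_eq_iff)
    then show False
      using parent(4)[of u] parent(4)[of w] u w by simp
  qed
qed

lemma tree_edges_subset: "tree_edges \<subseteq> {..<length es}"
  using parent(1) by (auto simp: tree_edges_def)

lemma finite_cotree_edges: "finite cotree_edges"
  by (simp add: cotree_edges_def)

lemma card_cotree_edges: "card cotree_edges = length es + 1 - card V"
proof -
  have "card tree_edges = card V - 1"
    unfolding tree_edges_def card_image[OF inj_on_parent_edge]
    using root_in_V finite_V by (simp add: card_Diff_singleton)
  moreover have "card V \<ge> 1"
    using V_nonempty finite_V by (simp add: Suc_leI card_gt_0_iff)
  moreover have "card tree_edges \<le> length es"
    using card_mono[OF _ tree_edges_subset] by simp
  moreover have "card cotree_edges = length es - card tree_edges"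
    unfolding cotree_edges_def
    using card_Diff_subset[OF finite_subset[OF tree_edges_subset] tree_edges_subset] by simp
  ultimately show ?thesis
    by linarith
qed

definition tree_reduce :: "(nat \<Rightarrow> int) \<Rightarrow> nat \<Rightarrow> int" where
  "tree_reduce f k = f k - edge_sum (tree_potential f) k"

lemma tree_reduce_linear:
  "tree_reduce (\<lambda>k. a * f k + b * g k) k = a * tree_reduce f k + b * tree_reduce g k"
  by (simp add: tree_reduce_def tree_potential_linear edge_sum_linear algebra_simps)

lemma tree_reduce_tree_edge:
  assumes "k \<in> tree_edges"
  shows "tree_reduce f k = 0"
proof -
  obtain u where u: "u \<in> V" "u \<noteq> root" "k = parent_edge u"
    using assms by (auto simp: tree_edges_def)
  then show ?thesis
    using parent[OF u(1,2)] parent_neq[OF u(1,2)] tree_potential_parent[OF u(1,2)]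
    by (simp add: tree_reduce_def edge_sum_def)
qed

lemma tree_reduce_eq_self:
  assumes "\<And>k. k \<in> tree_edges \<Longrightarrow> f k = 0"
  shows "tree_reduce f = f"
proof -
  have "tree_potential f u = 0" if "u \<in> V" for u
    using that
  proof (induction u rule: depth_induct)
    case (step u)
    show ?case
    proof (cases "u = root")
      case False
      then have "parent_edge u \<in> tree_edges"
        using step.hyps by (simp add: tree_edges_def)
      moreover have "depth (parent u) < depth u"
        using parent(4)[OF step.hyps False] by simp
      then have "tree_potential f (parent u) = 0"
        using step.IH parent(3)[OF step.hyps False] by blast
      ultimately show ?thesis
        using tree_potential_parent[OF step.hyps False] assms by simp
    qed (simp add: tree_potential_root)
  qed
  then have "edge_sum (tree_potential f) = edge_sum (\<lambda>_. 0)"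
    by (rule edge_sum_cong)
  then show ?thesis
    by (simp add: tree_reduce_def fun_eq_iff edge_sum_def)
qed

definition sign_sum :: "nat \<Rightarrow> int" where
  "sign_sum = edge_sum (\<lambda>u. (-1) ^ depth u)"

lemma tree_potential_edge_sum:
  assumes "u \<in> V"
  shows "tree_potential (edge_sum y) u = y u - (-1) ^ depth u * y root"
  using assms
proof (induction u rule: depth_induct)
  case (step u)
  show ?case
  proof (cases "u = root")
    case False
    note p = parent[OF step.hyps False]
    have "tree_potential (edge_sum y) u = y u + y (parent u) - tree_potential (edge_sum y) (parent u)"
      using tree_potential_parent[OF step.hyps False] p(1,2) parent_neq[OF step.hyps False]
      by (simp add: edge_sum_def)
    also have "tree_potential (edge_sum y) (parent u) = y (parent u) - (-1) ^ depth (parent u) * y root"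
      using step.IH[OF p(3)] p(4) by simp
    finally show ?thesis
      using p(4)[symmetric] by simp
  qed (simp add: tree_potential_root depth_root)
qed

lemma tree_reduce_edge_sum: "tree_reduce (edge_sum y) k = y root * sign_sum k"
proof (cases "k < length es")
  case True
  have "tree_reduce (edge_sum y) k = (\<Sum>u\<in>es ! k. y u - tree_potential (edge_sum y) u)"
    using True by (simp add: tree_reduce_def edge_sum_def sum_subtractf)
  also have "\<dots> = (\<Sum>u\<in>es ! k. y root * (-1) ^ depth u)"
    using edge_subset[OF True] by (intro sum.cong) (auto simp: tree_potential_edge_sum)
  finally show ?thesis
    using True by (simp add: sign_sum_def edge_sum_def sum_distrib_left)
qed (simp add: tree_reduce_def edge_sum_def sign_sum_def)

lemma eq_edge_sum_tree_potential:
  assumes cotree: "\<And>e. e \<in> cotree_edges \<Longrightarrow> tree_reduce g e = 0"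
    and vanish: "\<And>k. k \<ge> length es \<Longrightarrow> g k = 0"
  shows "g = edge_sum (tree_potential g)"
proof -
  have "tree_reduce g k = 0" for k
  proof -
    consider "k \<in> tree_edges" | "k \<in> cotree_edges" | "k \<ge> length es"
      by (cases "k < length es"; cases "k \<in> tree_edges") (auto simp: cotree_edges_def)
    then show ?thesis
    proof cases
      case 3
      then show ?thesis
        using vanish by (simp add: tree_reduce_def edge_sum_vanishes)
    qed (simp_all add: tree_reduce_tree_edge cotree)
  qed
  then show ?thesis
    by (simp add: tree_reduce_def fun_eq_iff)
qed

lemma range_edge_sum_iff:
  assumes vanish: "\<And>k. k \<ge> length es \<Longrightarrow> h k = 0"
  shows "h \<in> range edge_sum \<longleftrightarrow> (\<exists>c. \<forall>e\<in>cotree_edges. tree_reduce h e = c * sign_sum e)"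
proof
  assume "h \<in> range edge_sum"
  then obtain y where "h = edge_sum y"
    by blast
  then show "\<exists>c. \<forall>e\<in>cotree_edges. tree_reduce h e = c * sign_sum e"
    by (simp add: tree_reduce_edge_sum)
next
  assume "\<exists>c. \<forall>e\<in>cotree_edges. tree_reduce h e = c * sign_sum e"
  then obtain c where c: "\<And>e. e \<in> cotree_edges \<Longrightarrow> tree_reduce h e = c * sign_sum e"
    by blast
  define \<delta> where "\<delta> u = (if u = root then 1 else 0 :: int)" for u
  define g where "g k = 1 * h k + (- c) * edge_sum \<delta> k" for k
  have "tree_reduce g e = 0" if "e \<in> cotree_edges" for e
    using c[OF that] unfolding g_def tree_reduce_linear tree_reduce_edge_sum by (simp add: \<delta>_def)
  moreover have "g k = 0" if "k \<ge> length es" for k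
    using vanish[OF that] that by (simp add: g_def edge_sum_vanishes)
  ultimately have "g = edge_sum (tree_potential g)"
    by (rule eq_edge_sum_tree_potential)
  then have "h = edge_sum (\<lambda>u. 1 * tree_potential g u + c * \<delta> u)"
    unfolding edge_sum_linear by (simp add: fun_eq_iff g_def algebra_simps)
  then show "h \<in> range edge_sum"
    by blast
qed

lemma homology_iso_if_quotient_hom:
  assumes "quotient_hom cotree_edges sign_sum \<Theta> H"
  shows "homology V es 1 (card V - 1) \<cong> H"
proof -
  interpret Q: quotient_hom cotree_edges sign_sum \<Theta> H
    by (fact assms)
  have reduce_add: "tree_reduce (\<lambda>k. h k + h' k) = (\<lambda>k. tree_reduce h k + tree_reduce h' k)" for h h'
    using tree_reduce_linear[of 1 h 1 h'] by (simp add: fun_eq_iff)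
  have onto: "\<exists>h. (\<forall>k\<ge>length es. h k = 0) \<and> \<Theta> (tree_reduce h) = x" if x_in: "x \<in> carrier H" for x
  proof -
    obtain g where g: "x = \<Theta> g"
      using Q.onto x_in by blast
    define g' where "g' e = (if e \<in> cotree_edges then g e else 0)" for e
    have "tree_reduce g' = g'"
      by (rule tree_reduce_eq_self) (simp add: g'_def cotree_edges_def)
    moreover have "\<Theta> g' = \<Theta> g"
      by (rule Q.depends_on_E) (simp add: g'_def)
    moreover have "\<forall>k\<ge>length es. g' k = 0"
      by (simp add: g'_def cotree_edges_def)
    ultimately have "(\<forall>k\<ge>length es. g' k = 0) \<and> \<Theta> (tree_reduce g') = x"
      using g by simp
    then show ?thesis
      by blast
  qed
  show ?thesis
  proof (rule homology_iso_edge_quotient[OF V_nonempty Q.group_H])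
    fix h h' :: "nat \<Rightarrow> int"
    show "\<Theta> (tree_reduce (\<lambda>k. h k + h' k)) = \<Theta> (tree_reduce h) \<otimes>\<^bsub>H\<^esub> \<Theta> (tree_reduce h')"
      unfolding reduce_add by (rule Q.additive)
  next
    fix h :: "nat \<Rightarrow> int"
    assume "\<forall>k\<ge>length es. h k = 0"
    then show "\<Theta> (tree_reduce h) = \<one>\<^bsub>H\<^esub> \<longleftrightarrow> h \<in> range edge_sum"
      by (simp add: Q.kernel range_edge_sum_iff)
  qed (simp_all add: Q.into onto)
qed

lemma sign_sum_edge:
  assumes "e < length es" "es ! e = {a, b}" "a \<noteq> b"
  shows "sign_sum e = (-1) ^ depth a + (-1) ^ depth b"
  using assms by (simp add: sign_sum_def edge_sum_def)

lemma sign_sum_eq_0_iff: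
  assumes "e < length es" "es ! e = {a, b}" "a \<noteq> b"
  shows "sign_sum e = 0 \<longleftrightarrow> (even (depth a) \<longleftrightarrow> odd (depth b))"
  unfolding sign_sum_edge[OF assms] by (simp add: minus_one_power_iff)

lemma sign_sum_values: "sign_sum e \<in> {-2, 0, 2}"
proof (cases "e < length es")
  case True
  then obtain a b where "a \<noteq> b" "es ! e = {a, b}"
    using edge_endpoints by metis
  then show ?thesis
    using True by (simp add: sign_sum_edge minus_one_power_iff)
qed (simp add: sign_sum_def edge_sum_def)

lemma sign_sum_parent_edge:
  assumes "u \<in> V" "u \<noteq> root"
  shows "sign_sum (parent_edge u) = 0"
proof -
  note p = parent[OF assms]
  have "depth u = Suc (depth (parent u))"
    using p(4) by simp
  then show ?thesis
    using sign_sum_eq_0_iff[OF p(1,2) not_sym[OF parent_neq[OF assms]]] by simp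
qed

lemma sign_sum_tree_edge: "k \<in> tree_edges \<Longrightarrow> sign_sum k = 0"
  by (auto simp: tree_edges_def sign_sum_parent_edge)

lemma sign_sum_bipartite:
  assumes "bipartite V es"
  shows "sign_sum k = 0"
proof -
  obtain A where A: "\<And>e. e \<in> set es \<Longrightarrow> card (e \<inter> A) = 1"
    using assms by (auto simp: bipartite_def)
  have edge_split: "a \<in> A \<longleftrightarrow> b \<notin> A" if "k < length es" "es ! k = {a, b}" "a \<noteq> b" for k a b
  proof -
    have "es ! k \<in> set es"
      using that(1) by simp
    then have "card ({a, b} \<inter> A) = 1"
      using A that(2) by metis
    then show ?thesis
      using card_doubleton_Int_eq_1_iff[OF that(3)] by simp
  qed
  have side: "u \<in> A \<longleftrightarrow> (root \<in> A \<longleftrightarrow> even (depth u))" if "u \<in> V" for u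
    using that
  proof (induction u rule: depth_induct)
    case (step u)
    show ?case
    proof (cases "u = root")
      case False
      note p = parent[OF step.hyps False]
      have "depth u = Suc (depth (parent u))"
        using p(4) by simp
      then show ?thesis
        using step.IH[OF p(3)] edge_split[OF p(1,2) not_sym[OF parent_neq[OF step.hyps False]]]
        by simp
    qed (simp add: depth_root)
  qed
  show ?thesis
  proof (cases "k < length es")
    case True
    then obtain a b where ab: "a \<noteq> b" "es ! k = {a, b}" "a \<in> V" "b \<in> V"
      using edge_endpoints by metis
    then show ?thesis
      using sign_sum_eq_0_iff[OF True ab(2,1)] edge_split[OF True ab(2,1)] side[OF ab(3)] side[OF ab(4)]
      by auto
  qed (simp add: sign_sum_def edge_sum_def)
qed

lemma sign_sum_odd_cycle:
  assumes "has_odd_cycle V es"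
  obtains e where "e \<in> cotree_edges" "sign_sum e \<noteq> 0"
proof -
  obtain a b where ab: "{a, b} \<in> set es" "a \<noteq> b" "even (depth a) = even (depth b)"
    using odd_cycle_monochromatic_edge[OF assms, of "\<lambda>u. even (depth u)"] by blast
  then obtain e where e: "e < length es" "es ! e = {a, b}"
    by (auto simp: in_set_conv_nth)
  then have "sign_sum e \<noteq> 0"
    using sign_sum_eq_0_iff[OF e ab(2)] ab(3) by simp
  moreover have "e \<in> cotree_edges"
    using e(1) sign_sum_tree_edge calculation by (auto simp: cotree_edges_def)
  ultimately show ?thesis
    using that by blast
qed

theorem homology_bipartite:
  assumes "bipartite V es"
  shows "homology V es 1 (card V - 1) \<cong> Zpow (card cotree_edges)"
proof -
  obtain \<Theta> where \<Theta>: "quotient_hom cotree_edges (\<lambda>_. 0) \<Theta> (Zpow (card cotree_edges))"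
    using quotient_hom_Zpow[OF finite_cotree_edges] by blast
  have "sign_sum = (\<lambda>_. 0)"
    using sign_sum_bipartite[OF assms] by blast
  then have "quotient_hom cotree_edges sign_sum \<Theta> (Zpow (card cotree_edges))"
    using \<Theta> by simp
  then show ?thesis
    by (rule homology_iso_if_quotient_hom)
qed

theorem homology_odd_cycle:
  assumes "has_odd_cycle V es"
  shows "homology V es 1 (card V - 1) \<cong> Zpow (card cotree_edges - 1) \<times>\<times> integer_mod_group 2"
proof -
  obtain e0 where e0: "e0 \<in> cotree_edges" "sign_sum e0 \<noteq> 0"
    using sign_sum_odd_cycle[OF assms] by blast
  define w where "w e = sign_sum e div 2" for e
  have "w e0 * w e0 = 1"
    using sign_sum_values[of e0] e0(2) by (auto simp: w_def)
  then obtain \<Theta> where \<Theta>: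
    "quotient_hom cotree_edges (\<lambda>e. 2 * w e) \<Theta> (Zpow (card cotree_edges - 1) \<times>\<times> integer_mod_group 2)"
    using quotient_hom_Zpow_times_Z2[OF finite_cotree_edges e0(1)] by blast
  have "sign_sum e = 2 * w e" for e
    using sign_sum_values[of e] by (auto simp: w_def)
  then have "sign_sum = (\<lambda>e. 2 * w e)"
    by blast
  then have "quotient_hom cotree_edges sign_sum \<Theta> (Zpow (card cotree_edges - 1) \<times>\<times> integer_mod_group 2)"
    using \<Theta> by simp
  then show ?thesis
    by (rule homology_iso_if_quotient_hom)
qed

end

theorem corollary3p2:
  fixes V :: "'v set" and es :: "'v set list"
  assumes "simple_graph V es" and "connected_graph V es"
  shows "(bipartite V es \<longrightarrow>
            homology V es 1 (card V - 1) \<cong> Zpow (length es + 1 - card V))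
       \<and> (has_odd_cycle V es \<longrightarrow>
            homology V es 1 (card V - 1) \<cong> Zpow (length es + 1 - card V - 1) \<times>\<times> integer_mod_group 2)"
proof -
  interpret connected_simple_graph V es
    by unfold_locales (fact assms)+
  show ?thesis
    using homology_bipartite homology_odd_cycle by (simp add: card_cotree_edges)
qed

end
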